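(* In the Gaussian setting, for every $w\in S$ we have $\langle\nabla_{w_1}L(w),w_1\rangle<0$.
   Context: Gaussian setting: $y$ uniform on $\{\pm1\}$; $x=(x_1,x_2)$ with $x_1\in\mathbb{R}$, $x_1\mid y\sim\mathcal{N}(y\gamma,\sigma_1^2)$ for some $\gamma>0$, and $x_2\sim\mathcal{N}(0,\Sigma_2)$, $\Sigma_2\succ0$, independent of $(x_1,y)$. $w=(w_1,w_2)$ with $w_1\in\mathbb{R}$. $\ell_{exp}(t)=\exp(-|t|)$, $L(w)=\mathbb{E}[\ell_{exp}(w^\top x)]$. $\tilde\Sigma=\mathrm{diag}(\sigma_1^2,\Sigma_2)$ with extreme eigenvalues $\tilde\sigma_{min},\tilde\sigma_{max}$. The function $r(\sigma)=\sigma^2+\sigma\sqrt{2\log\frac{4\sqrt2}{\sqrt\pi\sigma}}$ for $0<\sigma\le\frac{4\sqrt2}{\sqrt\pi}$ and $r(\sigma)=2\sigma^2$ otherwise. Fix $R>0$, let $a=r(R\tilde\sigma_{max})$ (equivalently $a=\sqrt2R\tilde\sigma_{min}\mathrm{erfc}^{-1}(2\rho)$ for $\rho=\frac12\mathrm{erfc}(\frac{r(R\tilde\sigma_{max})}{\sqrt2R\tilde\sigma_{min}})$), and $S=\{w:\ w_1\gamma\ge a,\ \|w\|_2\le R\}$. *)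

theory Defs
  imports "HOL-Probability.Probability"
begin

definition pos_def_mat :: "real^'n^'n \<Rightarrow> bool" where
  "pos_def_mat A \<longleftrightarrow> transpose A = A \<and> (\<forall>v. v \<noteq> 0 \<longrightarrow> v \<bullet> (A *v v) > 0)"

definition mat_eigenvalues :: "real^'n^'n \<Rightarrow> real set" where
  "mat_eigenvalues A = {l. \<exists>v. v \<noteq> 0 \<and> A *v v = l *\<^sub>R v}"

definition Sigma_tilde :: "real \<Rightarrow> real^'n^'n \<Rightarrow> real^('n + unit)^('n + unit)" where
  "Sigma_tilde s1 S2 = (\<chi> i j. case (i, j) of
       (Inr _, Inr _) \<Rightarrow> s1\<^sup>2
     | (Inl a, Inl b) \<Rightarrow> S2 $ a $ b
     | _ \<Rightarrow> 0)"

definition sigma_tilde_max :: "real \<Rightarrow> real^'n^'n \<Rightarrow> real" where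
  "sigma_tilde_max s1 S2 = Max (mat_eigenvalues (Sigma_tilde s1 S2))"

definition sigma_tilde_min :: "real \<Rightarrow> real^'n^'n \<Rightarrow> real" where
  "sigma_tilde_min s1 S2 = Min (mat_eigenvalues (Sigma_tilde s1 S2))"

definition mv_gauss_density :: "real^'n^'n \<Rightarrow> real^'n \<Rightarrow> real" where
  "mv_gauss_density S x =
     exp (- (x \<bullet> (matrix_inv S *v x)) / 2) / sqrt ((2 * pi) ^ CARD('n) * det S)"

definition ell_exp :: "real \<Rightarrow> real" where
  "ell_exp t = exp (- \<bar>t\<bar>)"

text \<open>L(w) = E[ell_exp(w^T x)], y uniform on {-1,1}, x1 | y ~ N(y gamma, s1^2),
  x2 ~ N(0, Sigma2) independent of (x1, y).\<close>
definition gauss_loss :: "real \<Rightarrow> real \<Rightarrow> real^'n^'n \<Rightarrow> real \<times> (real^'n) \<Rightarrow> real" where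
  "gauss_loss \<gamma> s1 S2 w =
     (\<Sum>y\<in>{-1, 1::real}. (1/2) *
        (\<integral>x1. (\<integral>x2. ell_exp (fst w * x1 + snd w \<bullet> x2) * mv_gauss_density S2 x2 \<partial>lborel)
               * normal_density (y * \<gamma>) s1 x1 \<partial>lborel))"

definition r_fun :: "real \<Rightarrow> real" where
  "r_fun \<sigma> = (if 0 < \<sigma> \<and> \<sigma> \<le> 4 * sqrt 2 / sqrt pi
               then \<sigma>\<^sup>2 + \<sigma> * sqrt (2 * ln (4 * sqrt 2 / (sqrt pi * \<sigma>)))
               else 2 * \<sigma>\<^sup>2)"

definition S_set :: "real \<Rightarrow> real \<Rightarrow> real^'n^'n \<Rightarrow> real \<Rightarrow> (real \<times> (real^'n)) set" where
  "S_set \<gamma> s1 S2 R =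
     {w. fst w * \<gamma> \<ge> r_fun (R * sigma_tilde_max s1 S2) \<and> norm w \<le> R}"

end

theory Submission
  imports Defs
begin

text \<open>Fix \<open>b = w\<^sub>2\<close> and put \<open>h(s) = E \<ell>(s + b \<bullet> X\<^sub>2)\<close> with \<open>X\<^sub>2 \<sim> N(0, \<Sigma>\<^sub>2)\<close>, so that
  \<open>L(t, w\<^sub>2) = E\<^sub>y \<integral> h(t x\<^sub>1) \<phi>\<^sub>y(x\<^sub>1) dx\<^sub>1\<close>. Since \<open>\<ell> = exp(-|\<cdot>|)\<close> is 1-Lipschitz and differentiable off \<open>0\<close>,
  differentiation under the integral gives \<open>h' = H\<close> with \<open>H(s) = E \<ell>'(s + b \<bullet> X\<^sub>2)\<close>, and
  \<open>t \<partial>\<^sub>tL = E\<^sub>y \<integral> (t x\<^sub>1) H(t x\<^sub>1) \<phi>\<^sub>y(x\<^sub>1) dx\<^sub>1\<close>. The key fact is \<open>s H(s) < 0\<close> for \<open>s \<noteq> 0\<close>: shifting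
  \<open>X\<^sub>2\<close> along \<open>\<Sigma>\<^sub>2 b / (b \<bullet> \<Sigma>\<^sub>2 b)\<close> turns \<open>H(s)\<close> into an exponentially tilted integral of \<open>\<ell>'(b \<bullet> y)\<close>,
  and pairing \<open>y\<close> with \<open>-y\<close> shows that it has the sign of \<open>-s\<close>. Hence \<open>t \<partial>\<^sub>tL < 0\<close> whenever
  \<open>t \<noteq> 0\<close>; membership in \<open>S\<close> is used only to get \<open>w\<^sub>1 > 0\<close>, as \<open>r(R \<sigma>\<^sub>m\<^sub>a\<^sub>x) > 0\<close>.\<close>

section \<open>Positive definite matrices\<close>

lemma finite_mat_eigenvalues:
  fixes A :: "real^'n^'n"
  assumes sym: "transpose A = A"
  shows "finite (mat_eigenvalues A)"
proof -
  define ev where "ev l = (SOME v. v \<noteq> 0 \<and> A *v v = l *\<^sub>R v)" for l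
  have ev: "ev l \<noteq> 0 \<and> A *v ev l = l *\<^sub>R ev l" if "l \<in> mat_eigenvalues A" for l
  proof -
    from that obtain v where "v \<noteq> 0 \<and> A *v v = l *\<^sub>R v" unfolding mat_eigenvalues_def by auto
    thus ?thesis unfolding ev_def by (rule someI)
  qed
  have orth: "ev l \<bullet> ev m = 0" if "l \<in> mat_eigenvalues A" "m \<in> mat_eigenvalues A" "l \<noteq> m" for l m
  proof -
    have "(A *v ev l) \<bullet> ev m = ev l \<bullet> (A *v ev m)"
      by (metis dot_lmul_matrix inner_commute sym vector_transpose_matrix)
    hence "l * (ev l \<bullet> ev m) = m * (ev l \<bullet> ev m)"
      using ev[OF that(1)] ev[OF that(2)] by simp
    thus ?thesis using that(3) by simp
  qed
  have "inj_on ev (mat_eigenvalues A)"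
    by (rule inj_onI, rule ccontr) (metis orth ev inner_eq_zero_iff)
  moreover have "independent (ev ` mat_eigenvalues A)"
    by (rule pairwise_orthogonal_independent) (use orth ev in \<open>auto simp: pairwise_def orthogonal_def\<close>)
  ultimately show ?thesis
    using independent_imp_finite finite_imageD by blast
qed

lemma sigma_tilde_max_pos:
  fixes S2 :: "real^'n^'n"
  assumes "pos_def_mat S2" "s1 > 0"
  shows "sigma_tilde_max s1 S2 > 0"
proof -
  let ?A = "Sigma_tilde s1 S2"
  have sym: "transpose ?A = ?A"
    using assms(1) unfolding pos_def_mat_def Sigma_tilde_def
    by (auto simp: transpose_def vec_eq_iff split: sum.splits)
  have "?A *v axis (Inr ()) 1 = s1\<^sup>2 *\<^sub>R axis (Inr ()) 1"
    unfolding matrix_vector_mult_basis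
    by (auto simp: vec_eq_iff column_def Sigma_tilde_def axis_def split: sum.splits)
  moreover have "axis (Inr ()) 1 \<noteq> (0::real^('n+unit))" by (simp add: axis_eq_0_iff)
  ultimately have "s1\<^sup>2 \<in> mat_eigenvalues ?A"
    unfolding mat_eigenvalues_def by blast
  hence "s1\<^sup>2 \<le> sigma_tilde_max s1 S2"
    unfolding sigma_tilde_max_def using finite_mat_eigenvalues[OF sym] by simp
  thus ?thesis using assms(2) by (smt (verit) zero_less_power)
qed

lemma pos_def_mat_invertible:
  assumes "pos_def_mat (A::real^'n^'n)"
  shows "invertible A"
proof -
  have "x = 0" if "A *v x = 0" for x
    using assms that unfolding pos_def_mat_def by force
  thus ?thesis using matrix_left_invertible_ker invertible_left_inverse by blast
qed

lemma matrix_inv_right: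
  assumes "invertible (A::'a::semiring_1^'n^'n)"
  shows "A ** matrix_inv A = mat 1"
  using assms unfolding matrix_inv_def invertible_def by (rule someI_ex[THEN conjunct1])

lemma matrix_inv_left:
  assumes "invertible (A::'a::semiring_1^'n^'n)"
  shows "matrix_inv A ** A = mat 1"
  using assms unfolding matrix_inv_def invertible_def by (rule someI_ex[THEN conjunct2])

lemma pos_def_mat_matrix_inv_cancel:
  assumes "pos_def_mat (A::real^'n^'n)"
  shows "A *v (matrix_inv A *v x) = x" and "matrix_inv A *v (A *v x) = x"
  using matrix_inv_right[OF pos_def_mat_invertible[OF assms]]
    matrix_inv_left[OF pos_def_mat_invertible[OF assms]]
  by (simp_all add: matrix_vector_mul_assoc)

lemma pos_def_mat_matrix_inv_quadratic_pos:
  assumes "pos_def_mat (A::real^'n^'n)" and "v \<noteq> 0"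
  shows "v \<bullet> (matrix_inv A *v v) > 0"
proof -
  define u where "u = matrix_inv A *v v"
  have v: "v = A *v u" unfolding u_def by (simp add: pos_def_mat_matrix_inv_cancel[OF assms(1)])
  hence "u \<noteq> 0" using assms(2) by auto
  hence "u \<bullet> (A *v u) > 0" using assms(1) unfolding pos_def_mat_def by blast
  moreover have "v \<bullet> u = u \<bullet> (A *v u)" by (subst (1) v) (simp add: inner_commute)
  ultimately show ?thesis unfolding u_def by simp
qed

text \<open>Positive definiteness persists along the segment from the identity to \<open>A\<close>, so the
  determinant cannot change sign on the way.\<close>
lemma pos_def_mat_det_pos:
  assumes "pos_def_mat (A::real^'n^'n)"
  shows "det A > 0"
proof (rule ccontr)
  assume "\<not> det A > 0"
  define M where "M s = (\<chi> i j. (if i = j then 1 else 0) + s * (A$i$j - (if i = j then 1 else 0)))"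
    for s :: real
  have Mv: "M s *v x = (1 - s) *\<^sub>R x + s *\<^sub>R (A *v x)" for s x
  proof -
    have "((if i = j then 1 else 0) + s * (A$i$j - (if i = j then 1 else 0))) * x$j
        = (if i = j then (1 - s) * x$j else 0) + s * (A$i$j * x$j)" for i j
      by (simp add: algebra_simps)
    thus ?thesis
      by (simp add: vec_eq_iff matrix_vector_mult_def M_def sum.distrib sum_distrib_left)
  qed
  have "det (M s) \<noteq> 0" if "0 \<le> s" "s \<le> 1" for s
  proof -
    have "x = 0" if "M s *v x = 0" for x
    proof (rule ccontr)
      assume "x \<noteq> 0"
      hence "x \<bullet> (A *v x) > 0" "x \<bullet> x > 0" using assms unfolding pos_def_mat_def by auto
      hence "(1 - s) * (x \<bullet> x) + s * (x \<bullet> (A *v x)) > 0"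
        using \<open>0 \<le> s\<close> \<open>s \<le> 1\<close>
        by (cases "s = 0") (auto intro: add_nonneg_pos simp: mult_nonneg_nonneg)
      moreover have "x \<bullet> (M s *v x) = (1 - s) * (x \<bullet> x) + s * (x \<bullet> (A *v x))"
        by (simp add: Mv inner_add_right)
      ultimately show False using that by simp
    qed
    thus ?thesis
      using matrix_left_invertible_ker invertible_left_inverse invertible_det_nz by blast
  qed
  moreover have "\<forall>s. 0 \<le> s \<and> s \<le> 1 \<longrightarrow> isCont (\<lambda>s. det (M s)) s"
  proof -
    have "M s $ i $ j = (if i = j then 1 else 0) + s * (A$i$j - (if i = j then 1 else 0))" for s i j
      by (simp add: M_def)
    thus ?thesis unfolding det_def by (simp only:) (intro allI impI continuous_intros)
  qed
  moreover have "M 1 = A" "M 0 = mat 1" by (simp_all add: M_def mat_def vec_eq_iff)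
  ultimately show False
    using IVT2[of "\<lambda>s. det (M s)" 1 0 0] \<open>\<not> det A > 0\<close> by fastforce
qed

lemma quadratic_form_lower_bound:
  fixes A :: "real^'n^'n"
  assumes "\<And>v. v \<noteq> 0 \<Longrightarrow> v \<bullet> (A *v v) > 0"
  shows "\<exists>\<mu>>0. \<forall>x. \<mu> * (x \<bullet> x) \<le> x \<bullet> (A *v x)"
proof -
  have "continuous_on (sphere 0 1) (\<lambda>x::real^'n. x \<bullet> (A *v x))"
    by (intro continuous_on_inner continuous_on_id matrix_vector_mult_linear_continuous_on)
  moreover have "(axis undefined 1 :: real^'n) \<in> sphere 0 1" by simp
  ultimately obtain x0 where x0: "x0 \<in> sphere 0 1"
    and min: "\<And>y. y \<in> sphere 0 1 \<Longrightarrow> x0 \<bullet> (A *v x0) \<le> y \<bullet> (A *v y)"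
    using continuous_attains_inf[OF compact_sphere, of 0 1] by blast
  have "x0 \<bullet> (A *v x0) * (x \<bullet> x) \<le> x \<bullet> (A *v x)" for x
  proof (cases "x = 0")
    case False
    have "x0 \<bullet> (A *v x0) \<le> (x /\<^sub>R norm x) \<bullet> (A *v (x /\<^sub>R norm x))"
      using False by (intro min) simp
    also have "\<dots> = (x \<bullet> (A *v x)) / (x \<bullet> x)"
      by (simp add: matrix_vector_mult_scaleR power2_eq_square power2_norm_eq_inner[symmetric] divide_inverse)
    finally show ?thesis using False by (simp add: pos_le_divide_eq)
  qed simp
  moreover have "x0 \<bullet> (A *v x0) > 0" using x0 by (intro assms) auto
  ultimately show ?thesis by blast
qed

section \<open>Lebesgue integrals depending on a parameter\<close>

lemma has_real_derivative_integral:
  fixes f :: "real \<Rightarrow> 'a \<Rightarrow> real"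
  assumes int: "\<And>s. integrable M (f s)"
    and [measurable]: "f' \<in> borel_measurable M"
    and "integrable M g"
    and lip: "\<And>s x. x \<in> space M \<Longrightarrow> \<bar>f s x - f s0 x\<bar> \<le> g x * \<bar>s - s0\<bar>"
    and deriv: "AE x in M. ((\<lambda>s. f s x) has_real_derivative f' x) (at s0)"
  shows "((\<lambda>s. \<integral>x. f s x \<partial>M) has_real_derivative (\<integral>x. f' x \<partial>M)) (at s0)"
  unfolding has_field_derivative_iff
proof (subst tendsto_at_iff_sequentially, intro allI impI)
  fix X :: "nat \<Rightarrow> real"
  assume X: "\<forall>i. X i \<in> UNIV - {s0}" "X \<longlonglongrightarrow> s0"
  define Q where "Q i x = (f (X i) x - f s0 x) / (X i - s0)" for i x
  have "(\<lambda>i. \<integral>x. Q i x \<partial>M) \<longlonglongrightarrow> (\<integral>x. f' x \<partial>M)"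
  proof (rule integral_dominated_convergence[where w = g])
    show "Q i \<in> borel_measurable M" for i
      unfolding Q_def using int[THEN borel_measurable_integrable] by measurable
    show "AE x in M. (\<lambda>i. Q i x) \<longlonglongrightarrow> f' x"
      using deriv
    proof (rule AE_mp, intro AE_I2 impI)
      fix x assume "((\<lambda>s. f s x) has_real_derivative f' x) (at s0)"
      hence "((\<lambda>s. (f s x - f s0 x) / (s - s0)) \<longlongrightarrow> f' x) (at s0)"
        by (simp add: has_field_derivative_iff)
      thus "(\<lambda>i. Q i x) \<longlonglongrightarrow> f' x"
        unfolding Q_def using X by (subst (asm) tendsto_at_iff_sequentially) (auto simp: comp_def)
    qed
    show "AE x in M. norm (Q i x) \<le> g x" for i
      using lip X(1) by (intro AE_I2) (auto simp: Q_def abs_divide divide_le_eq)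
  qed fact+
  moreover have "(\<integral>x. Q i x \<partial>M) = ((\<integral>x. f (X i) x \<partial>M) - (\<integral>x. f s0 x \<partial>M)) / (X i - s0)" for i
    unfolding Q_def using int by (simp add: integral_diff)
  ultimately show "((\<lambda>s. ((\<integral>x. f s x \<partial>M) - (\<integral>x. f s0 x \<partial>M)) / (s - s0)) \<circ> X)
      \<longlonglongrightarrow> (\<integral>x. f' x \<partial>M)"
    by (simp add: comp_def)
qed

lemma integral_neg_AE:
  fixes f :: "'a \<Rightarrow> real"
  assumes "integrable M f" and neg: "AE x in M. f x < 0" and "emeasure M (space M) \<noteq> 0"
  shows "integral\<^sup>L M f < 0"
proof -
  have int: "integrable M (\<lambda>x. - f x)" and nn: "AE x in M. 0 \<le> - f x"
    using assms(1) neg by (auto elim: AE_mp)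
  have "integral\<^sup>L M (\<lambda>x. - f x) \<noteq> 0"
  proof
    assume "integral\<^sup>L M (\<lambda>x. - f x) = 0"
    hence "AE x in M. - f x = 0" using integral_nonneg_eq_0_iff_AE[OF int nn] by simp
    with neg have "AE x in M. False" by eventually_elim simp
    thus False using assms(3) ae_filter_eq_bot_iff trivial_limit_def by metis
  qed
  moreover have "integral\<^sup>L M (\<lambda>x. - f x) \<ge> 0" using nn by (rule integral_nonneg_AE)
  ultimately show ?thesis by simp
qed

lemma lborel_integral_isometric_affine:
  fixes f :: "'a::euclidean_space \<Rightarrow> real"
  assumes [measurable]: "f \<in> borel_measurable borel" and c: "\<bar>c\<bar> = 1"
  shows "integral\<^sup>L lborel f = integral\<^sup>L lborel (\<lambda>x. f (t + c *\<^sub>R x))"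
    and "integrable lborel f \<longleftrightarrow> integrable lborel (\<lambda>x. f (t + c *\<^sub>R x))"
proof -
  have M: "(lborel :: 'a measure) = distr lborel borel (\<lambda>x. t + c *\<^sub>R x)"
    using lborel_affine[of c t] c by (simp add: density_1)
  show "integral\<^sup>L lborel f = integral\<^sup>L lborel (\<lambda>x. f (t + c *\<^sub>R x))"
    by (subst M) (simp add: integral_distr)
  show "integrable lborel f \<longleftrightarrow> integrable lborel (\<lambda>x. f (t + c *\<^sub>R x))"
    by (subst M) (simp add: integrable_distr_eq)
qed

lemma lborel_integral_symmetrize:
  fixes f :: "'a::euclidean_space \<Rightarrow> real"
  assumes [measurable]: "f \<in> borel_measurable borel" and "integrable lborel f"
  shows "integral\<^sup>L lborel f = (\<integral>x. f x + f (- x) \<partial>lborel) / 2"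
    and "integrable lborel (\<lambda>x. f x + f (- x))"
  using lborel_integral_isometric_affine[of f "-1" 0] assms by (simp_all add: integral_add)

lemma AE_lborel_hyperplane:
  fixes b :: "'a::euclidean_space"
  assumes "b \<noteq> 0 \<or> c \<noteq> 0"
  shows "AE x in lborel. b \<bullet> x \<noteq> c"
proof -
  have "{x. b \<bullet> x = c} \<in> sets lborel" by simp
  hence "{x. b \<bullet> x = c} \<in> null_sets lborel"
    using negligible_hyperplane[OF assms] negligible_iff_null_sets null_sets_completion_iff by blast
  thus ?thesis by (rule AE_I') auto
qed

section \<open>The exponential loss and the Gaussian density\<close>

text \<open>The value \<open>ell_exp' 0 = 0\<close> is arbitrary; it only matters on null sets.\<close>
definition ell_exp' :: "real \<Rightarrow> real" where
  "ell_exp' z = - sgn z * exp (- \<bar>z\<bar>)"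

lemma ell_exp_measurable [measurable]: "ell_exp \<in> borel_measurable borel"
  unfolding ell_exp_def by measurable

lemma ell_exp'_measurable [measurable]: "ell_exp' \<in> borel_measurable borel"
  unfolding ell_exp'_def by measurable

lemma abs_ell_exp_le_1: "\<bar>ell_exp z\<bar> \<le> 1"
  by (simp add: ell_exp_def)

lemma abs_ell_exp'_le_1: "\<bar>ell_exp' z\<bar> \<le> 1"
  by (auto simp: ell_exp'_def abs_mult sgn_if)

lemma ell_exp'_minus: "ell_exp' (- z) = - ell_exp' z"
  by (simp add: ell_exp'_def sgn_minus)

lemma sgn_ell_exp': "sgn (ell_exp' z) = - sgn z"
  by (simp add: ell_exp'_def sgn_mult)

lemma ell_exp_has_real_derivative:
  assumes "z \<noteq> 0"
  shows "(ell_exp has_real_derivative ell_exp' z) (at z)"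
proof (cases "z > 0")
  case True
  have "((\<lambda>y. exp (- y)) has_real_derivative ell_exp' z) (at z)"
    using True by (auto intro!: derivative_eq_intros simp: ell_exp'_def)
  thus ?thesis
    by (rule has_field_derivative_transform_within_open[where S = "{0<..}"])
       (use True in \<open>auto simp: ell_exp_def\<close>)
next
  case False
  hence "z < 0" using assms by simp
  have "((\<lambda>y. exp y) has_real_derivative ell_exp' z) (at z)"
    using \<open>z < 0\<close> by (auto intro!: derivative_eq_intros simp: ell_exp'_def)
  thus ?thesis
    by (rule has_field_derivative_transform_within_open[where S = "{..<0}"])
       (use \<open>z < 0\<close> in \<open>auto simp: ell_exp_def\<close>)
qed

lemma exp_minus_lipschitz:
  fixes u v :: real
  assumes "0 \<le> u" "0 \<le> v"
  shows "\<bar>exp (- u) - exp (- v)\<bar> \<le> \<bar>u - v\<bar>"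
proof -
  have *: "\<bar>exp (- u) - exp (- v)\<bar> \<le> \<bar>u - v\<bar>" if "0 \<le> u" "u \<le> v" for u v :: real
  proof -
    have "exp (- u) - exp (- v) = exp (- u) * (1 - exp (- (v - u)))"
      by (simp add: algebra_simps exp_add[symmetric])
    also have "\<dots> \<le> 1 * (v - u)"
    proof (rule mult_mono)
      show "1 - exp (- (v - u)) \<le> v - u"
        using exp_ge_add_one_self[of "u - v"] by (simp only: minus_diff_eq)
    qed (use that in auto)
    finally show ?thesis using that by simp
  qed
  show ?thesis
    using *[of u v] *[of v u] assms by (cases "u \<le> v") (auto simp: abs_minus_commute)
qed

lemma ell_exp_lipschitz: "\<bar>ell_exp a - ell_exp c\<bar> \<le> \<bar>a - c\<bar>"
  using exp_minus_lipschitz[of "\<bar>a\<bar>" "\<bar>c\<bar>"] abs_triangle_ineq3[of a c]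
  unfolding ell_exp_def by simp

lemma integrable_exp_minus_inner:
  assumes "c > 0"
  shows "integrable lborel (\<lambda>x::'a::euclidean_space. exp (- c * (x \<bullet> x)))"
proof -
  define \<sigma> where "\<sigma> = 1 / sqrt (2 * c)"
  have \<sigma>: "\<sigma> > 0" "\<sigma>\<^sup>2 = 1 / (2 * c)"
    using assms by (simp_all add: \<sigma>_def power_divide)
  have "exp (- c * u\<^sup>2) = sqrt (2 * pi * \<sigma>\<^sup>2) * normal_density 0 \<sigma> u" for u
    unfolding normal_density_def \<sigma>(2) using assms \<sigma>(1) by (simp add: field_simps)
  hence "integrable lborel (\<lambda>u::real. exp (- c * u\<^sup>2))"
    using \<sigma>(1) by simp
  hence fin: "(\<integral>\<^sup>+u. ennreal (exp (- c * u\<^sup>2)) \<partial>lborel) \<noteq> \<infinity>"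
    by (rule integrableD(2))
  have "ennreal (exp (- c * (x \<bullet> x))) = (\<Prod>b\<in>Basis. ennreal (exp (- c * (x \<bullet> b)\<^sup>2)))" for x :: 'a
  proof -
    have "- c * (x \<bullet> x) = (\<Sum>b\<in>Basis. - c * (x \<bullet> b)\<^sup>2)"
      by (subst euclidean_inner) (simp add: sum_distrib_left power2_eq_square)
    thus ?thesis by (simp add: exp_sum prod_ennreal)
  qed
  hence "(\<integral>\<^sup>+x. ennreal (exp (- c * (x \<bullet> x))) \<partial>(lborel::'a measure))
      = (\<Prod>b\<in>(Basis::'a set). (\<integral>\<^sup>+u. ennreal (exp (- c * u\<^sup>2)) \<partial>lborel))"
    by (simp only:) (rule nn_integral_lborel_prod, auto)
  also have "\<dots> \<noteq> \<infinity>" using fin by (simp add: power_eq_top_ennreal)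
  finally show ?thesis by (intro integrableI_bounded) (auto simp: top.not_eq_extremum)
qed

lemma mv_gauss_density_pos:
  assumes "pos_def_mat A"
  shows "mv_gauss_density A x > 0"
  using pos_def_mat_det_pos[OF assms] by (simp add: mv_gauss_density_def)

lemma mv_gauss_density_minus: "mv_gauss_density A (- x) = mv_gauss_density A x"
proof -
  have "matrix_inv A *v (- x) = - (matrix_inv A *v x)"
    by (simp add: vec_eq_iff matrix_vector_mult_def sum_negf)
  thus ?thesis by (simp add: mv_gauss_density_def)
qed

lemma mv_gauss_density_measurable [measurable]: "mv_gauss_density A \<in> borel_measurable borel"
  unfolding mv_gauss_density_def divide_inverse
  by (intro borel_measurable_continuous_onI continuous_intros continuous_on_inner
      continuous_on_id matrix_vector_mult_linear_continuous_on)

lemma mv_gauss_density_integrable: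
  fixes A :: "real^'n^'n"
  assumes "pos_def_mat A"
  shows "integrable lborel (mv_gauss_density A)"
proof -
  obtain \<mu> where \<mu>: "\<mu> > 0" "\<And>x. \<mu> * (x \<bullet> x) \<le> x \<bullet> (matrix_inv A *v x)"
    using quadratic_form_lower_bound[OF pos_def_mat_matrix_inv_quadratic_pos[OF assms]] by auto
  define c where "c = sqrt ((2 * pi) ^ CARD('n) * det A)"
  have "c > 0" using pos_def_mat_det_pos[OF assms] by (simp add: c_def)
  have int: "integrable lborel (\<lambda>x::real^'n. exp (- (\<mu> / 2) * (x \<bullet> x)) / c)"
    using integrable_exp_minus_inner[of "\<mu> / 2"] \<mu>(1) by (intro integrable_divide_zero) simp
  have bound: "norm (mv_gauss_density A x) \<le> norm (exp (- (\<mu> / 2) * (x \<bullet> x)) / c)" for x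
  proof -
    have "exp (- (x \<bullet> (matrix_inv A *v x)) / 2) \<le> exp (- (\<mu> / 2) * (x \<bullet> x))"
      using \<mu>(2)[of x] by (simp only: exp_le_cancel_iff)
    hence "mv_gauss_density A x \<le> exp (- (\<mu> / 2) * (x \<bullet> x)) / c"
      unfolding mv_gauss_density_def c_def[symmetric] by (rule divide_right_mono) (use \<open>c > 0\<close> in simp)
    thus ?thesis using mv_gauss_density_pos[OF assms, of x] \<open>c > 0\<close> by simp
  qed
  show ?thesis
    by (rule Bochner_Integration.integrable_bound[OF int]) (simp, rule AE_I2, rule bound)
qed

lemma mv_gauss_density_shift:
  fixes A :: "real^'n^'n"
  assumes "pos_def_mat A" and "b \<noteq> 0"
  defines "q \<equiv> b \<bullet> (A *v b)"
  defines "v \<equiv> (1 / q) *\<^sub>R (A *v b)"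
  shows "q > 0" and "b \<bullet> v = 1"
    and "mv_gauss_density A (x - s *\<^sub>R v)
           = mv_gauss_density A x * exp ((2 * s * (b \<bullet> x) - s\<^sup>2) / (2 * q))"
proof -
  show q: "q > 0" using assms(1,2) unfolding q_def pos_def_mat_def by auto
  show bv: "b \<bullet> v = 1" using q unfolding v_def q_def by simp
  have symm: "(A *v u) \<bullet> w = u \<bullet> (A *v w)" for u w
    using assms(1) unfolding pos_def_mat_def
    by (metis dot_lmul_matrix inner_commute vector_transpose_matrix)
  define u where "u = matrix_inv A *v x"
  have iv: "matrix_inv A *v v = (1 / q) *\<^sub>R b"
    unfolding v_def by (simp add: matrix_vector_mult_scaleR pos_def_mat_matrix_inv_cancel[OF assms(1)])
  have xu: "A *v u = x" unfolding u_def by (rule pos_def_mat_matrix_inv_cancel(1)[OF assms(1)])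
  have vu: "v \<bullet> u = (b \<bullet> x) / q"
    unfolding v_def using symm[of b u] xu by simp
  have vu': "u \<bullet> v = (b \<bullet> x) / q" using vu by (simp add: inner_commute)
  have vb: "v \<bullet> b = 1" using bv by (simp add: inner_commute)
  have "(x - s *\<^sub>R v) \<bullet> (matrix_inv A *v (x - s *\<^sub>R v)) = (x - s *\<^sub>R v) \<bullet> (u - (s / q) *\<^sub>R b)"
    by (simp add: matrix_vector_mult_diff_distrib matrix_vector_mult_scaleR iv u_def)
  also have "\<dots> = x \<bullet> u - (s / q) * (x \<bullet> b) - s * (v \<bullet> u) + s * (s / q) * (v \<bullet> b)"
    by (simp add: inner_diff_left inner_diff_right algebra_simps)
  also have "\<dots> = x \<bullet> u - (2 * s * (b \<bullet> x) - s\<^sup>2) / q"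
    using q by (simp add: vu vu' vb bv inner_commute[of x b] field_simps power2_eq_square)
  finally have quad: "(x - s *\<^sub>R v) \<bullet> (matrix_inv A *v (x - s *\<^sub>R v))
      = x \<bullet> u - (2 * s * (b \<bullet> x) - s\<^sup>2) / q" .
  show "mv_gauss_density A (x - s *\<^sub>R v)
      = mv_gauss_density A x * exp ((2 * s * (b \<bullet> x) - s\<^sup>2) / (2 * q))"
    unfolding mv_gauss_density_def quad u_def[symmetric]
    by (simp add: exp_add[symmetric] diff_divide_distrib add_divide_distrib)
qed

section \<open>Gaussian smoothing of the loss\<close>

definition gauss_smoothed :: "real^'n^'n \<Rightarrow> (real \<Rightarrow> real) \<Rightarrow> real^'n \<Rightarrow> real \<Rightarrow> real" where
  "gauss_smoothed A f b s = (\<integral>x. f (s + b \<bullet> x) * mv_gauss_density A x \<partial>lborel)"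

text \<open>The total mass is of course \<open>1\<close>, but only its positivity and finiteness are needed.\<close>
definition gauss_mass :: "real^'n^'n \<Rightarrow> real" where
  "gauss_mass A = (\<integral>x. mv_gauss_density A x \<partial>lborel)"

lemma gauss_smoothed_measurable [measurable]:
  assumes [measurable]: "f \<in> borel_measurable borel"
  shows "gauss_smoothed A f b \<in> borel_measurable borel"
  unfolding gauss_smoothed_def by measurable

lemma gauss_mass_pos:
  assumes "pos_def_mat A"
  shows "gauss_mass A > 0"
  using integral_neg_AE[of lborel "\<lambda>x. - mv_gauss_density A x"]
    mv_gauss_density_integrable[OF assms] mv_gauss_density_pos[OF assms]
  by (simp add: gauss_mass_def)

lemma integrable_gauss_smoothed_integrand:
  assumes "pos_def_mat A" and [measurable]: "f \<in> borel_measurable borel"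
    and "\<And>z. \<bar>f z\<bar> \<le> 1"
  shows "integrable lborel (\<lambda>x. f (s + b \<bullet> x) * mv_gauss_density A x)"
  by (rule Bochner_Integration.integrable_bound[OF mv_gauss_density_integrable[OF assms(1)]])
     (simp, rule AE_I2, simp add: abs_mult mult_left_le_one_le assms(3))

lemma abs_gauss_smoothed_le:
  assumes "pos_def_mat A" and [measurable]: "f \<in> borel_measurable borel"
    and "\<And>z. \<bar>f z\<bar> \<le> 1"
  shows "\<bar>gauss_smoothed A f b s\<bar> \<le> gauss_mass A"
proof -
  have "\<bar>f (s + b \<bullet> x) * mv_gauss_density A x\<bar> \<le> mv_gauss_density A x" for x
    using assms(3)[of "s + b \<bullet> x"] mv_gauss_density_pos[OF assms(1), of x]
    by (simp add: abs_mult mult_left_le_one_le)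
  thus ?thesis
    unfolding gauss_smoothed_def gauss_mass_def
    by (intro integral_abs_bound_integral integrable_gauss_smoothed_integrand assms
        mv_gauss_density_integrable)
qed

lemma gauss_smoothed_ell_exp_lipschitz:
  assumes "pos_def_mat A"
  shows "\<bar>gauss_smoothed A ell_exp b s - gauss_smoothed A ell_exp b s0\<bar> \<le> gauss_mass A * \<bar>s - s0\<bar>"
proof -
  have int: "integrable lborel (\<lambda>x. ell_exp (s + b \<bullet> x) * mv_gauss_density A x)" for s
    by (rule integrable_gauss_smoothed_integrand[OF assms ell_exp_measurable abs_ell_exp_le_1])
  have "gauss_smoothed A ell_exp b s - gauss_smoothed A ell_exp b s0
      = (\<integral>x. (ell_exp (s + b \<bullet> x) - ell_exp (s0 + b \<bullet> x)) * mv_gauss_density A x \<partial>lborel)"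
    unfolding gauss_smoothed_def using int by (simp add: left_diff_distrib)
  also have "\<bar>\<dots>\<bar> \<le> (\<integral>x. \<bar>s - s0\<bar> * mv_gauss_density A x \<partial>lborel)"
  proof (rule integral_abs_bound_integral)
    show "integrable lborel (\<lambda>x. (ell_exp (s + b \<bullet> x) - ell_exp (s0 + b \<bullet> x)) * mv_gauss_density A x)"
      using int[of s] int[of s0] by (simp add: left_diff_distrib)
    show "integrable lborel (\<lambda>x. \<bar>s - s0\<bar> * mv_gauss_density A x)"
      using mv_gauss_density_integrable[OF assms] by simp
    show "\<bar>(ell_exp (s + b \<bullet> x) - ell_exp (s0 + b \<bullet> x)) * mv_gauss_density A x\<bar>
        \<le> \<bar>s - s0\<bar> * mv_gauss_density A x" for x
      using ell_exp_lipschitz[of "s + b \<bullet> x" "s0 + b \<bullet> x"] mv_gauss_density_pos[OF assms, of x]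
      by (simp add: abs_mult mult_right_mono)
  qed
  finally show ?thesis by (simp add: gauss_mass_def mult.commute)
qed

lemma gauss_smoothed_ell_exp_has_real_derivative:
  fixes A :: "real^'n^'n"
  assumes "pos_def_mat A" and "b \<noteq> 0 \<or> s0 \<noteq> 0"
  shows "(gauss_smoothed A ell_exp b has_real_derivative gauss_smoothed A ell_exp' b s0) (at s0)"
  unfolding gauss_smoothed_def[abs_def]
proof (rule has_real_derivative_integral[where g = "mv_gauss_density A"])
  show "integrable lborel (\<lambda>x. ell_exp (s + b \<bullet> x) * mv_gauss_density A x)" for s
    by (rule integrable_gauss_smoothed_integrand[OF assms(1) ell_exp_measurable abs_ell_exp_le_1])
  show "\<bar>ell_exp (s + b \<bullet> x) * mv_gauss_density A x - ell_exp (s0 + b \<bullet> x) * mv_gauss_density A x\<bar>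
      \<le> mv_gauss_density A x * \<bar>s - s0\<bar>" for s x
  proof -
    have "\<bar>ell_exp (s + b \<bullet> x) * mv_gauss_density A x - ell_exp (s0 + b \<bullet> x) * mv_gauss_density A x\<bar>
        = \<bar>ell_exp (s + b \<bullet> x) - ell_exp (s0 + b \<bullet> x)\<bar> * \<bar>mv_gauss_density A x\<bar>"
      by (metis abs_mult left_diff_distrib)
    also have "\<dots> \<le> \<bar>s - s0\<bar> * \<bar>mv_gauss_density A x\<bar>"
      using ell_exp_lipschitz[of "s + b \<bullet> x" "s0 + b \<bullet> x"] by (intro mult_right_mono) simp_all
    also have "\<dots> = mv_gauss_density A x * \<bar>s - s0\<bar>"
      using mv_gauss_density_pos[OF assms(1), of x] by simp
    finally show ?thesis .
  qed
  have "AE x in lborel. b \<bullet> x \<noteq> - s0"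
    using assms(2) by (intro AE_lborel_hyperplane) simp
  then show "AE x in lborel. ((\<lambda>s. ell_exp (s + b \<bullet> x) * mv_gauss_density A x) has_real_derivative
      ell_exp' (s0 + b \<bullet> x) * mv_gauss_density A x) (at s0)"
  proof (rule AE_mp, intro AE_I2 impI)
    fix x :: "real^'n" assume "b \<bullet> x \<noteq> - s0"
    hence "(ell_exp has_real_derivative ell_exp' (s0 + b \<bullet> x)) (at (s0 + b \<bullet> x))"
      by (intro ell_exp_has_real_derivative) linarith
    thus "((\<lambda>s. ell_exp (s + b \<bullet> x) * mv_gauss_density A x) has_real_derivative
        ell_exp' (s0 + b \<bullet> x) * mv_gauss_density A x) (at s0)"
      by (intro DERIV_cmult_right) (simp add: DERIV_shift)
  qed
qed (use mv_gauss_density_integrable[OF assms(1)] in simp_all)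

lemma sgn_exp_diff: "sgn (exp a - exp b) = sgn (a - b :: real)"
  by (cases a b rule: linorder_cases) (simp_all add: sgn_if)

lemma ell_exp'_tilted_difference_neg:
  assumes "s \<noteq> 0" "t \<noteq> 0" "q > 0"
  shows "s * (ell_exp' t * (exp ((2 * s * t - s\<^sup>2) / (2 * q)) - exp ((2 * s * (- t) - s\<^sup>2) / (2 * q)))) < 0"
proof -
  have "(2 * s * t - s\<^sup>2) / (2 * q) - (2 * s * (- t) - s\<^sup>2) / (2 * q) = (s * t) * (2 / q)"
    using assms(3) by (simp add: field_simps)
  hence sgn_diff: "sgn (exp ((2 * s * t - s\<^sup>2) / (2 * q)) - exp ((2 * s * (- t) - s\<^sup>2) / (2 * q)))
      = sgn s * sgn t"
    using assms(3) by (simp add: sgn_exp_diff sgn_mult)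
  have "sgn (s * (ell_exp' t * (exp ((2 * s * t - s\<^sup>2) / (2 * q))
      - exp ((2 * s * (- t) - s\<^sup>2) / (2 * q))))) = sgn s * (- sgn t * (sgn s * sgn t))"
    by (simp only: sgn_mult sgn_ell_exp' sgn_diff)
  also have "\<dots> = -1" using assms(1,2) by (simp add: sgn_if)
  finally show ?thesis by (simp add: sgn_1_neg)
qed

text \<open>Shifting the Gaussian by \<open>s v\<close> with \<open>b \<bullet> v = 1\<close> removes \<open>s\<close> from the argument of \<open>f\<close>.\<close>
lemma gauss_smoothed_eq_tilted:
  fixes A :: "real^'n^'n" and s :: real
  assumes "pos_def_mat A" and "b \<noteq> 0" and [measurable]: "f \<in> borel_measurable borel"
    and "\<And>z. \<bar>f z\<bar> \<le> 1"
  defines "q \<equiv> b \<bullet> (A *v b)"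
  defines "K \<equiv> \<lambda>y. f (b \<bullet> y) * mv_gauss_density A y * exp ((2 * s * (b \<bullet> y) - s\<^sup>2) / (2 * q))"
  shows "gauss_smoothed A f b s = integral\<^sup>L lborel K" and "integrable lborel K"
proof -
  define v where "v = (1 / q) *\<^sub>R (A *v b)"
  have bv: "b \<bullet> v = 1"
    and shift: "\<And>y. mv_gauss_density A (y - s *\<^sub>R v)
      = mv_gauss_density A y * exp ((2 * s * (b \<bullet> y) - s\<^sup>2) / (2 * q))"
    using mv_gauss_density_shift[OF assms(1,2)] unfolding q_def v_def by auto
  define G where "G x = f (s + b \<bullet> x) * mv_gauss_density A x" for x
  have [measurable]: "G \<in> borel_measurable borel" unfolding G_def by measurable
  have GK: "G (y - s *\<^sub>R v) = K y" for y
    using bv by (simp add: G_def K_def shift inner_diff_right)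
  show "gauss_smoothed A f b s = integral\<^sup>L lborel K"
    using lborel_integral_isometric_affine(1)[of G 1 "- (s *\<^sub>R v)"]
    by (simp add: GK gauss_smoothed_def G_def[symmetric])
  have "integrable lborel G"
    unfolding G_def by (rule integrable_gauss_smoothed_integrand[OF assms(1,3,4)])
  then show "integrable lborel K"
    using lborel_integral_isometric_affine(2)[of G 1 "- (s *\<^sub>R v)"] by (simp add: GK)
qed

text \<open>After the tilt, pairing \<open>y\<close> with \<open>-y\<close> leaves an integrand of the sign of \<open>-s\<close>.\<close>
lemma gauss_smoothed_ell_exp'_sign:
  fixes A :: "real^'n^'n"
  assumes "pos_def_mat A" and "s \<noteq> 0"
  shows "s * gauss_smoothed A ell_exp' b s < 0"
proof (cases "b = 0")
  case True
  have "gauss_smoothed A ell_exp' b s = ell_exp' s * gauss_mass A"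
    by (simp add: True gauss_smoothed_def gauss_mass_def)
  moreover have "s * ell_exp' s < 0"
    using assms(2) by (cases "s > 0") (auto simp: ell_exp'_def mult_pos_neg mult_neg_pos)
  ultimately show ?thesis
    using gauss_mass_pos[OF assms(1)] by (simp add: mult.assoc[symmetric] mult_neg_pos)
next
  case False
  define q where "q = b \<bullet> (A *v b)"
  have q: "q > 0" using mv_gauss_density_shift(1)[OF assms(1) False] by (simp add: q_def)
  define E where "E t = exp ((2 * s * t - s\<^sup>2) / (2 * q))" for t
  define K where "K y = ell_exp' (b \<bullet> y) * mv_gauss_density A y * E (b \<bullet> y)" for y
  have [measurable]: "K \<in> borel_measurable borel" unfolding K_def E_def by measurable
  have "gauss_smoothed A ell_exp' b s = integral\<^sup>L lborel K" and "integrable lborel K"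
    using gauss_smoothed_eq_tilted[OF assms(1) False ell_exp'_measurable abs_ell_exp'_le_1, of s]
    unfolding K_def E_def q_def by simp_all
  hence sym: "gauss_smoothed A ell_exp' b s = (\<integral>y. K y + K (- y) \<partial>lborel) / 2"
    and "integrable lborel (\<lambda>y. K y + K (- y))"
    using lborel_integral_symmetrize[of K] by simp_all
  have "AE y in lborel. b \<bullet> y \<noteq> 0"
    using False by (intro AE_lborel_hyperplane) simp
  then have "AE y in lborel. s * (K y + K (- y)) < 0"
  proof (rule AE_mp, intro AE_I2 impI)
    fix y :: "real^'n" assume "b \<bullet> y \<noteq> 0"
    have "s * (K y + K (- y))
        = mv_gauss_density A y * (s * (ell_exp' (b \<bullet> y) * (E (b \<bullet> y) - E (- (b \<bullet> y)))))"
      by (simp add: K_def mv_gauss_density_minus ell_exp'_minus algebra_simps)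
    also have "\<dots> < 0"
      unfolding E_def
      by (rule mult_pos_neg[OF mv_gauss_density_pos[OF assms(1)]
            ell_exp'_tilted_difference_neg[OF assms(2) \<open>b \<bullet> y \<noteq> 0\<close> q]])
    finally show "s * (K y + K (- y)) < 0" .
  qed
  hence "(\<integral>y. s * (K y + K (- y)) \<partial>lborel) < 0"
    using \<open>integrable lborel (\<lambda>y. K y + K (- y))\<close> by (intro integral_neg_AE) auto
  thus ?thesis unfolding sym by simp
qed

section \<open>The derivative of the loss in the first coordinate\<close>

lemma integrable_abs_times_normal_density:
  assumes "\<sigma> > 0"
  shows "integrable lborel (\<lambda>x. \<bar>x\<bar> * normal_density \<mu> \<sigma> x)"
  using integrable_abs[OF integrable_normal_moment_nz_1[OF assms, of \<mu>]]
  by (simp add: abs_mult mult.commute)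

lemma scaled_gauss_smoothed_has_real_derivative:
  fixes A :: "real^'n^'n"
  assumes A: "pos_def_mat A" and "t0 \<noteq> 0" and \<sigma>: "\<sigma> > 0"
  shows "((\<lambda>t. \<integral>x. gauss_smoothed A ell_exp b (t * x) * normal_density \<mu> \<sigma> x \<partial>lborel)
      has_real_derivative
      (\<integral>x. gauss_smoothed A ell_exp' b (t0 * x) * x * normal_density \<mu> \<sigma> x \<partial>lborel)) (at t0)"
proof (rule has_real_derivative_integral[where g = "\<lambda>x. gauss_mass A * (\<bar>x\<bar> * normal_density \<mu> \<sigma> x)"])
  show "integrable lborel (\<lambda>x. gauss_smoothed A ell_exp b (t * x) * normal_density \<mu> \<sigma> x)" for t
  proof (rule Bochner_Integration.integrable_bound[where f = "\<lambda>x. gauss_mass A * normal_density \<mu> \<sigma> x"])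
    show "AE x in lborel. norm (gauss_smoothed A ell_exp b (t * x) * normal_density \<mu> \<sigma> x)
        \<le> norm (gauss_mass A * normal_density \<mu> \<sigma> x)"
      using abs_gauss_smoothed_le[OF A ell_exp_measurable abs_ell_exp_le_1] gauss_mass_pos[OF A]
      by (intro AE_I2) (simp add: abs_mult mult_right_mono)
  qed (use \<sigma> in simp_all)
  show "integrable lborel (\<lambda>x. gauss_mass A * (\<bar>x\<bar> * normal_density \<mu> \<sigma> x))"
    using integrable_abs_times_normal_density[OF \<sigma>] by simp
  show "\<bar>gauss_smoothed A ell_exp b (t * x) * normal_density \<mu> \<sigma> x
        - gauss_smoothed A ell_exp b (t0 * x) * normal_density \<mu> \<sigma> x\<bar>
      \<le> gauss_mass A * (\<bar>x\<bar> * normal_density \<mu> \<sigma> x) * \<bar>t - t0\<bar>" for t x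
  proof -
    let ?h = "gauss_smoothed A ell_exp b" and ?\<phi> = "normal_density \<mu> \<sigma> x"
    have "\<bar>?h (t * x) * ?\<phi> - ?h (t0 * x) * ?\<phi>\<bar> = \<bar>?h (t * x) - ?h (t0 * x)\<bar> * ?\<phi>"
      by (simp add: abs_mult flip: left_diff_distrib)
    also have "\<dots> \<le> gauss_mass A * \<bar>t * x - t0 * x\<bar> * ?\<phi>"
      by (intro mult_right_mono gauss_smoothed_ell_exp_lipschitz[OF A]) simp
    also have "\<dots> = gauss_mass A * (\<bar>x\<bar> * ?\<phi>) * \<bar>t - t0\<bar>"
      by (simp add: abs_mult mult_ac flip: left_diff_distrib)
    finally show ?thesis .
  qed
  have "AE x in lborel. x \<noteq> 0" by (rule AE_lborel_singleton)
  then show "AE x in lborel. ((\<lambda>t. gauss_smoothed A ell_exp b (t * x) * normal_density \<mu> \<sigma> x)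
      has_real_derivative gauss_smoothed A ell_exp' b (t0 * x) * x * normal_density \<mu> \<sigma> x) (at t0)"
  proof (rule AE_mp, intro AE_I2 impI)
    fix x :: real assume "x \<noteq> 0"
    hence "(gauss_smoothed A ell_exp b has_real_derivative gauss_smoothed A ell_exp' b (t0 * x)) (at (t0 * x))"
      using \<open>t0 \<noteq> 0\<close> by (intro gauss_smoothed_ell_exp_has_real_derivative[OF A]) simp
    from DERIV_chain2[OF this DERIV_cmult_right[OF DERIV_ident, of x]]
    show "((\<lambda>t. gauss_smoothed A ell_exp b (t * x) * normal_density \<mu> \<sigma> x) has_real_derivative
        gauss_smoothed A ell_exp' b (t0 * x) * x * normal_density \<mu> \<sigma> x) (at t0)"
      by (intro DERIV_cmult_right) simp
  qed
qed measurable

lemma scaled_gauss_smoothed_derivative_sign: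
  fixes A :: "real^'n^'n"
  assumes A: "pos_def_mat A" and "t0 \<noteq> 0" and \<sigma>: "\<sigma> > 0"
  shows "(\<integral>x. gauss_smoothed A ell_exp' b (t0 * x) * x * normal_density \<mu> \<sigma> x \<partial>lborel) * t0 < 0"
proof -
  have "(\<integral>x. gauss_smoothed A ell_exp' b (t0 * x) * x * normal_density \<mu> \<sigma> x \<partial>lborel) * t0
      = (\<integral>x. gauss_smoothed A ell_exp' b (t0 * x) * x * normal_density \<mu> \<sigma> x * t0 \<partial>lborel)"
    by simp
  also have "\<dots> = (\<integral>x. (t0 * x) * gauss_smoothed A ell_exp' b (t0 * x) * normal_density \<mu> \<sigma> x \<partial>lborel)"
    by (intro Bochner_Integration.integral_cong) (simp_all add: algebra_simps)
  also have "\<dots> < 0"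
  proof (rule integral_neg_AE)
    show "integrable lborel (\<lambda>x. t0 * x * gauss_smoothed A ell_exp' b (t0 * x) * normal_density \<mu> \<sigma> x)"
    proof (rule Bochner_Integration.integrable_bound
        [where f = "\<lambda>x. \<bar>t0\<bar> * gauss_mass A * (\<bar>x\<bar> * normal_density \<mu> \<sigma> x)"])
      show "integrable lborel (\<lambda>x. \<bar>t0\<bar> * gauss_mass A * (\<bar>x\<bar> * normal_density \<mu> \<sigma> x))"
        using integrable_abs_times_normal_density[OF \<sigma>] by simp
      have "\<bar>t0 * x * gauss_smoothed A ell_exp' b (t0 * x) * normal_density \<mu> \<sigma> x\<bar>
          \<le> \<bar>t0\<bar> * gauss_mass A * (\<bar>x\<bar> * normal_density \<mu> \<sigma> x)" for x
      proof -
        have "\<bar>t0 * x * gauss_smoothed A ell_exp' b (t0 * x) * normal_density \<mu> \<sigma> x\<bar>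
            = (\<bar>t0\<bar> * (\<bar>x\<bar> * normal_density \<mu> \<sigma> x)) * \<bar>gauss_smoothed A ell_exp' b (t0 * x)\<bar>"
          by (simp add: abs_mult mult_ac)
        also have "\<dots> \<le> (\<bar>t0\<bar> * (\<bar>x\<bar> * normal_density \<mu> \<sigma> x)) * gauss_mass A"
          by (intro mult_left_mono abs_gauss_smoothed_le[OF A ell_exp'_measurable abs_ell_exp'_le_1]) simp
        finally show ?thesis by (simp add: mult_ac)
      qed
      thus "AE x in lborel. norm (t0 * x * gauss_smoothed A ell_exp' b (t0 * x) * normal_density \<mu> \<sigma> x)
          \<le> norm (\<bar>t0\<bar> * gauss_mass A * (\<bar>x\<bar> * normal_density \<mu> \<sigma> x))"
        using gauss_mass_pos[OF A] by (intro AE_I2) simp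
    qed measurable
    have "AE x in lborel. x \<noteq> 0" by (rule AE_lborel_singleton)
    then show "AE x in lborel. t0 * x * gauss_smoothed A ell_exp' b (t0 * x) * normal_density \<mu> \<sigma> x < 0"
    proof (rule AE_mp, intro AE_I2 impI)
      fix x :: real assume "x \<noteq> 0"
      hence "t0 * x * gauss_smoothed A ell_exp' b (t0 * x) < 0"
        using \<open>t0 \<noteq> 0\<close> by (intro gauss_smoothed_ell_exp'_sign[OF A]) simp
      thus "t0 * x * gauss_smoothed A ell_exp' b (t0 * x) * normal_density \<mu> \<sigma> x < 0"
        using normal_density_pos[OF \<sigma>] by (simp add: mult_neg_pos)
    qed
  qed simp
  finally show ?thesis .
qed

lemma r_fun_pos:
  assumes "\<sigma> > 0"
  shows "r_fun \<sigma> > 0"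
proof (cases "\<sigma> \<le> 4 * sqrt 2 / sqrt pi")
  case True
  hence "1 \<le> 4 * sqrt 2 / (sqrt pi * \<sigma>)" using assms by (simp add: field_simps)
  hence "0 \<le> \<sigma> * sqrt (2 * ln (4 * sqrt 2 / (sqrt pi * \<sigma>)))" using assms by simp
  thus ?thesis using True assms by (simp add: r_fun_def add_pos_nonneg)
qed (use assms in \<open>simp add: r_fun_def\<close>)

theorem lemma3:
  fixes \<gamma> s1 R :: real and S2 :: "real^'n^'n" and w :: "real \<times> (real^'n)"
  assumes "\<gamma> > 0" and "s1 > 0" and "pos_def_mat S2" and "R > 0"
    and "w \<in> S_set \<gamma> s1 S2 R"
  shows "\<exists>D. ((\<lambda>t. gauss_loss \<gamma> s1 S2 (t, snd w)) has_real_derivative D) (at (fst w))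
             \<and> D * fst w < 0"
proof -
  have "r_fun (R * sigma_tilde_max s1 S2) > 0"
    using sigma_tilde_max_pos[OF assms(3,2)] assms(4) by (intro r_fun_pos) simp
  hence "fst w \<noteq> 0" using assms(5) by (auto simp: S_set_def)
  define I where "I y t = (\<integral>x. gauss_smoothed S2 ell_exp (snd w) (t * x)
      * normal_density (y * \<gamma>) s1 x \<partial>lborel)" for y t
  define J where "J y = (\<integral>x. gauss_smoothed S2 ell_exp' (snd w) (fst w * x) * x
      * normal_density (y * \<gamma>) s1 x \<partial>lborel)" for y
  have loss: "gauss_loss \<gamma> s1 S2 (t, snd w) = 1/2 * I (-1) t + 1/2 * I 1 t" for t
    by (simp add: gauss_loss_def I_def gauss_smoothed_def)
  have "(I y has_real_derivative J y) (at (fst w))" for y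
    unfolding I_def[abs_def] J_def
    by (rule scaled_gauss_smoothed_has_real_derivative[OF assms(3) \<open>fst w \<noteq> 0\<close> assms(2)])
  hence deriv: "((\<lambda>t. gauss_loss \<gamma> s1 S2 (t, snd w)) has_real_derivative 1/2 * J (-1) + 1/2 * J 1) (at (fst w))"
    unfolding loss by (intro DERIV_add DERIV_cmult)
  have sign: "J y * fst w < 0" for y
    unfolding J_def by (rule scaled_gauss_smoothed_derivative_sign[OF assms(3) \<open>fst w \<noteq> 0\<close> assms(2)])
  have "(1/2 * J (-1) + 1/2 * J 1) * fst w < 0"
    using sign[of "-1"] sign[of 1] by (simp only: distrib_right mult.assoc)
  with deriv show ?thesis by blast
qed

end
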